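(* Let $D$ be a digraph with $n$ vertices which contains a directed cycle, let $g$ be its girth, and let $t$ be the number of induced directed cycles of $D$. If $tg\geq n$, then $$\alpha(D)\geq\frac{g-1}{g}\left(\frac{n^g}{tg}\right)^{\frac{1}{g-1}}.$$
   Context: All digraphs are finite, loopless and strict (at most one edge from $u$ to $v$ for distinct $u,v$). The girth of a digraph is the length of its shortest directed cycle. An induced directed cycle is a directed cycle $C$ such that the induced subdigraph on $V(C)$ is exactly $C$. A subset $S\subseteq V(D)$ is acyclic if $D[S]$ contains no directed cycle; $\alpha(D)$ is the maximum size of an acyclic subset of $V(D)$. *)

theory Defs
  imports Complex_Main
begin

definition digraph :: "'a set \<Rightarrow> ('a \<times> 'a) set \<Rightarrow> bool" where
  "digraph V E \<longleftrightarrow> finite V \<and> E \<subseteq> V \<times> V \<and> (\<forall>v. (v, v) \<notin> E)"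

definition is_dcycle :: "('a \<times> 'a) set \<Rightarrow> 'a list \<Rightarrow> bool" where
  "is_dcycle E cs \<longleftrightarrow> length cs \<ge> 2 \<and> distinct cs \<and>
     (\<forall>i < length cs. (cs ! i, cs ! ((i + 1) mod length cs)) \<in> E)"

definition cycle_edges :: "'a list \<Rightarrow> ('a \<times> 'a) set" where
  "cycle_edges cs = {(cs ! i, cs ! ((i + 1) mod length cs)) | i. i < length cs}"

definition is_induced_dcycle :: "('a \<times> 'a) set \<Rightarrow> 'a list \<Rightarrow> bool" where
  "is_induced_dcycle E cs \<longleftrightarrow> is_dcycle E cs \<and>
     E \<inter> (set cs \<times> set cs) = cycle_edges cs"

text \<open>The number of induced directed cycles, counted as subdigraphs
  (a cycle and its rotations are the same subdigraph).\<close>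

definition num_induced_dcycles :: "('a \<times> 'a) set \<Rightarrow> nat" where
  "num_induced_dcycles E = card {(set cs, cycle_edges cs) | cs. is_induced_dcycle E cs}"

definition has_dcycle :: "('a \<times> 'a) set \<Rightarrow> bool" where
  "has_dcycle E \<longleftrightarrow> (\<exists>cs. is_dcycle E cs)"

definition girth :: "('a \<times> 'a) set \<Rightarrow> nat" where
  "girth E = (LEAST k. \<exists>cs. is_dcycle E cs \<and> length cs = k)"

definition acyclic_set :: "('a \<times> 'a) set \<Rightarrow> 'a set \<Rightarrow> bool" where
  "acyclic_set E S \<longleftrightarrow> \<not> (\<exists>cs. is_dcycle E cs \<and> set cs \<subseteq> S)"

definition alpha_acyclic :: "'a set \<Rightarrow> ('a \<times> 'a) set \<Rightarrow> nat" where
  "alpha_acyclic V E = Max {card S | S. S \<subseteq> V \<and> acyclic_set E S}"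

end

theory Submission
  imports Defs
begin

text \<open>Keep every vertex independently with probability p. In expectation this keeps n p vertices
  and, since an induced cycle has at least g vertices, at most t p^g vertex sets of induced
  cycles. Every directed cycle contains the vertex set of an induced one (shortcut along chords),
  so deleting one vertex from each surviving induced cycle leaves an acyclic set of size at least
  n p - t p^g. The choice p = (n / (t g))^(1/(g-1)), which is at most 1 because t g \<ge> n,
  maximises this bound and gives the theorem.\<close>

lemma is_dcycle_iff_cycle_edges:
  "is_dcycle E cs \<longleftrightarrow> 2 \<le> length cs \<and> distinct cs \<and> cycle_edges cs \<subseteq> E"
  by (auto simp: is_dcycle_def cycle_edges_def)

lemma cycle_edges_subset_Times: "cycle_edges cs \<subseteq> set cs \<times> set cs"
  by (auto simp: cycle_edges_def intro!: nth_mem mod_less_divisor)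

lemma cycle_edges_rotate_subset: "cycle_edges (rotate j cs) \<subseteq> cycle_edges cs"
proof
  fix e assume "e \<in> cycle_edges (rotate j cs)"
  then obtain k where k: "k < length cs"
    and e: "e = (rotate j cs ! k, rotate j cs ! ((k + 1) mod length cs))"
    by (auto simp: cycle_edges_def)
  define i where "i = (j + k) mod length cs"
  have "i < length cs" unfolding i_def by (intro mod_less_divisor) (use k in auto)
  moreover have "rotate j cs ! k = cs ! i" using k by (simp add: nth_rotate i_def)
  moreover have "rotate j cs ! ((k + 1) mod length cs) = cs ! ((i + 1) mod length cs)"
  proof -
    have "(k + 1) mod length cs < length cs" by (intro mod_less_divisor) (use k in auto)
    then have "rotate j cs ! ((k + 1) mod length cs)
        = cs ! ((j + (k + 1) mod length cs) mod length cs)"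
      by (rule nth_rotate)
    also have "(j + (k + 1) mod length cs) mod length cs = (i + 1) mod length cs"
      by (simp add: i_def mod_simps)
    finally show ?thesis .
  qed
  ultimately show "e \<in> cycle_edges cs" unfolding e cycle_edges_def by blast
qed

lemma is_dcycle_rotate: "is_dcycle E cs \<Longrightarrow> is_dcycle E (rotate j cs)"
  using cycle_edges_rotate_subset by (fastforce simp: is_dcycle_iff_cycle_edges)

lemma is_dcycle_take:
  assumes cs: "is_dcycle E cs" and m: "0 < m" "m < length cs" and closing: "(cs ! m, cs ! 0) \<in> E"
  shows "is_dcycle E (take (Suc m) cs)"
  unfolding is_dcycle_def
proof (intro conjI allI impI)
  show "2 \<le> length (take (Suc m) cs)" "distinct (take (Suc m) cs)"
    using cs m by (auto simp: is_dcycle_def)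
  fix k assume "k < length (take (Suc m) cs)"
  then have k: "k \<le> m" using m by simp
  show "(take (Suc m) cs ! k, take (Suc m) cs ! ((k + 1) mod length (take (Suc m) cs))) \<in> E"
  proof (cases "k = m")
    case True
    then show ?thesis using m closing by simp
  next
    case False
    then have "k + 1 < length cs" using k m by simp
    moreover have "(cs ! k, cs ! ((k + 1) mod length cs)) \<in> E"
      using cs k m unfolding is_dcycle_def by (meson le_less_trans)
    ultimately show ?thesis using False k m by simp
  qed
qed

lemma set_dcycle_subset:
  assumes "is_dcycle E cs" "E \<subseteq> V \<times> V" shows "set cs \<subseteq> V"
  using assms by (fastforce simp: is_dcycle_def in_set_conv_nth)

text \<open>A chord a \<rightarrow> b shortcuts the cycle: after rotating b to the front, the segment
  from b to a closes up through the chord.\<close>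

lemma shorter_dcycle_if_not_induced:
  assumes cs: "is_dcycle E cs" and not_induced: "\<not> is_induced_dcycle E cs"
    and loopfree: "\<forall>v. (v, v) \<notin> E"
  obtains cs' where "is_dcycle E cs'" "set cs' \<subseteq> set cs" "length cs' < length cs"
proof -
  have "cycle_edges cs \<subseteq> E \<inter> (set cs \<times> set cs)"
    using cs cycle_edges_subset_Times by (auto simp: is_dcycle_iff_cycle_edges)
  then obtain a b where chord: "(a, b) \<in> E" "a \<in> set cs" "b \<in> set cs" "(a, b) \<notin> cycle_edges cs"
    using cs not_induced unfolding is_induced_dcycle_def by blast
  obtain j where "j < length cs" "b = cs ! j" using chord(3) by (metis in_set_conv_nth)
  define ds where "ds = rotate j cs"
  have ds: "is_dcycle E ds" "length ds = length cs" "set ds = set cs"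
    using is_dcycle_rotate[OF cs] by (simp_all add: ds_def)
  have "ds ! 0 = b"
    using \<open>j < length cs\<close> \<open>b = cs ! j\<close> unfolding ds_def by (subst nth_rotate) auto
  obtain m where m: "m < length cs" "a = ds ! m" using chord(2) ds by (metis in_set_conv_nth)
  have "m \<noteq> 0" using m \<open>ds ! 0 = b\<close> chord(1) loopfree by metis
  have "m \<noteq> length cs - 1"
  proof
    assume "m = length cs - 1"
    then have "m + 1 = length ds" using ds(2) m(1) by linarith
    then have "(a, b) \<in> cycle_edges ds"
      unfolding cycle_edges_def using m \<open>ds ! 0 = b\<close> ds(2) by (intro CollectI exI[of _ m]) simp
    then show False using chord(4) cycle_edges_rotate_subset ds_def by blast
  qed
  have "is_dcycle E (take (Suc m) ds)"
    using is_dcycle_take[OF ds(1)] m \<open>m \<noteq> 0\<close> \<open>ds ! 0 = b\<close> chord(1) ds(2) by simp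
  moreover have "set (take (Suc m) ds) \<subseteq> set cs" using ds(3) set_take_subset by metis
  moreover have "length (take (Suc m) ds) < length cs"
    using m \<open>m \<noteq> length cs - 1\<close> ds(2) by simp
  ultimately show ?thesis using that by blast
qed

lemma dcycle_contains_induced_dcycle:
  assumes "is_dcycle E cs" and loopfree: "\<forall>v. (v, v) \<notin> E"
  obtains cs' where "is_induced_dcycle E cs'" "set cs' \<subseteq> set cs"
  using assms(1)
proof (induction "length cs" arbitrary: cs rule: less_induct)
  case less
  show ?case
  proof (cases "is_induced_dcycle E cs")
    case True
    then show ?thesis using less.prems(1) by blast
  next
    case False
    then obtain cs' where "is_dcycle E cs'" "set cs' \<subseteq> set cs" "length cs' < length cs"
      using shorter_dcycle_if_not_induced[OF less.prems(2) _ loopfree] by blast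
    then show ?thesis using less.hyps less.prems(1) by (meson order_trans)
  qed
qed

text \<open>The probability of S when each element of A is kept independently with probability p.\<close>

definition subset_weight :: "real \<Rightarrow> 'a set \<Rightarrow> 'a set \<Rightarrow> real" where
  "subset_weight p A S = p ^ card S * (1 - p) ^ card (A - S)"

lemma sum_subset_weight_supsets:
  assumes A: "finite A" and "X \<subseteq> A"
  shows "(\<Sum>S\<in>Pow A. subset_weight p A S * (if X \<subseteq> S then 1 else 0)) = p ^ card X"
proof -
  have "subset_weight p A S * (if X \<subseteq> S then 1 else 0)
      = (\<Prod>a\<in>S. p) * (\<Prod>a\<in>A - S. if a \<in> X then 0 else 1 - p)" if "S \<subseteq> A" for S
  proof (cases "X \<subseteq> S")
    case True
    then have "(\<Prod>a\<in>A - S. if a \<in> X then 0 else 1 - p) = (\<Prod>a\<in>A - S. 1 - p)"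
      by (intro prod.cong) auto
    then show ?thesis using True by (simp add: subset_weight_def)
  next
    case False
    then obtain a where "a \<in> (A - S) \<inter> X" using \<open>X \<subseteq> A\<close> by blast
    then have "(\<Prod>a\<in>A - S. if a \<in> X then 0 else 1 - p) = 0"
      using A by (subst prod_zero_iff) auto
    then show ?thesis using False by simp
  qed
  then have "(\<Sum>S\<in>Pow A. subset_weight p A S * (if X \<subseteq> S then 1 else 0))
      = (\<Sum>S\<in>Pow A. (\<Prod>a\<in>S. p) * (\<Prod>a\<in>A - S. if a \<in> X then 0 else 1 - p))"
    by (intro sum.cong) auto
  also have "\<dots> = (\<Prod>a\<in>A. p + (if a \<in> X then 0 else 1 - p))"
    by (rule prod_add[OF A, symmetric])
  also have "\<dots> = (\<Prod>a\<in>A. if a \<in> X then p else 1)"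
    by (intro prod.cong) auto
  also have "\<dots> = p ^ card X"
    using A \<open>X \<subseteq> A\<close> by (simp add: prod.If_cases Int_absorb1)
  finally show ?thesis .
qed

lemma sum_subset_weight: "finite A \<Longrightarrow> (\<Sum>S\<in>Pow A. subset_weight p A S) = 1"
  using sum_subset_weight_supsets[of A "{}" p] by simp

lemma exists_ge_weighted_average:
  fixes w f :: "'b \<Rightarrow> real"
  assumes "finite I" and "\<And>i. i \<in> I \<Longrightarrow> 0 \<le> w i" and "(\<Sum>i\<in>I. w i) = 1"
  shows "\<exists>i\<in>I. (\<Sum>j\<in>I. w j * f j) \<le> f i"
proof -
  have "I \<noteq> {}" using assms(3) by auto
  then have "Max (f ` I) \<in> f ` I" using \<open>finite I\<close> by simp
  then obtain i where i: "i \<in> I" "f i = Max (f ` I)" by auto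
  have "(\<Sum>j\<in>I. w j * f j) \<le> (\<Sum>j\<in>I. w j * f i)"
    using i \<open>finite I\<close> assms(2) by (intro sum_mono mult_left_mono) auto
  also have "\<dots> = f i" using assms(3) by (simp add: sum_distrib_right[symmetric])
  finally show ?thesis using i(1) by blast
qed

lemma exists_subset_card_minus_covered_ge:
  fixes p :: real
  assumes V: "finite V" and F: "F \<subseteq> Pow V" and p: "0 \<le> p" "p \<le> 1"
  obtains S where "S \<subseteq> V"
    "real (card V) * p - (\<Sum>X\<in>F. p ^ card X) \<le> real (card S) - real (card {X\<in>F. X \<subseteq> S})"
proof -
  have "finite F" using F V by (meson finite_Pow_iff finite_subset)
  let ?w = "subset_weight p V"
  have card_as_sum: "real (card S) = (\<Sum>v\<in>V. if {v} \<subseteq> S then 1 else 0)" if "S \<subseteq> V" for S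
    using V that by (simp add: sum.If_cases Int_absorb1)
  have covered_as_sum: "real (card {X\<in>F. X \<subseteq> S}) = (\<Sum>X\<in>F. if X \<subseteq> S then 1 else 0)" for S
    using \<open>finite F\<close> by (simp add: sum.If_cases Int_def)
  have "(\<Sum>S\<in>Pow V. ?w S * (real (card S) - real (card {X\<in>F. X \<subseteq> S})))
      = (\<Sum>S\<in>Pow V. \<Sum>v\<in>V. ?w S * (if {v} \<subseteq> S then 1 else 0))
        - (\<Sum>S\<in>Pow V. \<Sum>X\<in>F. ?w S * (if X \<subseteq> S then 1 else 0))"
    by (simp add: card_as_sum covered_as_sum right_diff_distrib sum_subtractf sum_distrib_left)
  also have "\<dots> = (\<Sum>v\<in>V. \<Sum>S\<in>Pow V. ?w S * (if {v} \<subseteq> S then 1 else 0))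
        - (\<Sum>X\<in>F. \<Sum>S\<in>Pow V. ?w S * (if X \<subseteq> S then 1 else 0))"
    by (simp only: sum.swap[of _ "Pow V"])
  also have "\<dots> = real (card V) * p - (\<Sum>X\<in>F. p ^ card X)"
  proof -
    have "(\<Sum>S\<in>Pow V. ?w S * (if {v} \<subseteq> S then 1 else 0)) = p" if "v \<in> V" for v
      using sum_subset_weight_supsets[OF V, of "{v}" p] that by simp
    moreover have "(\<Sum>S\<in>Pow V. ?w S * (if X \<subseteq> S then 1 else 0)) = p ^ card X" if "X \<in> F" for X
      using sum_subset_weight_supsets[OF V, of X p] that F by blast
    ultimately show ?thesis by simp
  qed
  finally have expectation: "(\<Sum>S\<in>Pow V. ?w S * (real (card S) - real (card {X\<in>F. X \<subseteq> S})))
      = real (card V) * p - (\<Sum>X\<in>F. p ^ card X)" .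
  have "\<exists>S\<in>Pow V. (\<Sum>S\<in>Pow V. ?w S * (real (card S) - real (card {X\<in>F. X \<subseteq> S})))
      \<le> real (card S) - real (card {X\<in>F. X \<subseteq> S})"
  proof (rule exists_ge_weighted_average)
    show "0 \<le> ?w S" if "S \<in> Pow V" for S
      unfolding subset_weight_def using p by (intro mult_nonneg_nonneg zero_le_power) simp_all
  qed (use V sum_subset_weight[OF V] in simp_all)
  then show ?thesis using that expectation by auto
qed

lemma card_le_alpha_acyclic:
  assumes "finite V" "S \<subseteq> V" "acyclic_set E S"
  shows "card S \<le> alpha_acyclic V E"
proof -
  have "{card S | S. S \<subseteq> V \<and> acyclic_set E S} \<subseteq> card ` Pow V" by blast
  then have "finite {card S | S. S \<subseteq> V \<and> acyclic_set E S}"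
    using \<open>finite V\<close> by (meson finite_Pow_iff finite_imageI finite_subset)
  then show ?thesis unfolding alpha_acyclic_def using assms(2,3) by (blast intro: Max_ge)
qed

lemma alpha_acyclic_ge_card_minus_covered:
  assumes V: "finite V" and F: "finite F" "{} \<notin> F" and "S \<subseteq> V"
    and hitting: "\<And>cs. is_dcycle E cs \<Longrightarrow> \<exists>X\<in>F. X \<subseteq> set cs"
  shows "real (card S) - real (card {X\<in>F. X \<subseteq> S}) \<le> real (alpha_acyclic V E)"
proof -
  define c where "c X = (SOME x. x \<in> X)" for X :: "'a set"
  have c: "c X \<in> X" if "X \<in> F" for X
    using F(2) that unfolding c_def by (metis some_in_eq)
  define S' where "S' = S - c ` {X\<in>F. X \<subseteq> S}"
  have "card S - card (c ` {X\<in>F. X \<subseteq> S}) \<le> card S'"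
    unfolding S'_def by (rule diff_card_le_card_Diff) (use F(1) in simp)
  moreover have "card (c ` {X\<in>F. X \<subseteq> S}) \<le> card {X\<in>F. X \<subseteq> S}"
    using F(1) by (intro card_image_le) simp
  ultimately have "real (card S) - real (card {X\<in>F. X \<subseteq> S}) \<le> real (card S')" by linarith
  moreover have "acyclic_set E S'"
    unfolding acyclic_set_def
  proof
    assume "\<exists>cs. is_dcycle E cs \<and> set cs \<subseteq> S'"
    then obtain cs X where "is_dcycle E cs" "set cs \<subseteq> S'" "X \<in> F" "X \<subseteq> set cs"
      using hitting by blast
    then have "c X \<in> S'" and "X \<subseteq> S" using c unfolding S'_def by blast+
    then show False using \<open>X \<in> F\<close> unfolding S'_def by blast
  qed
  moreover have "S' \<subseteq> V" using \<open>S \<subseteq> V\<close> unfolding S'_def by blast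
  ultimately show ?thesis using card_le_alpha_acyclic[OF V] by (meson of_nat_le_iff order_trans)
qed

lemma girth_le: "is_dcycle E cs \<Longrightarrow> girth E \<le> length cs"
  unfolding girth_def by (rule Least_le) blast

lemma girth_attained:
  assumes "has_dcycle E"
  obtains cs where "is_dcycle E cs" "length cs = girth E"
proof -
  have "\<exists>cs. is_dcycle E cs \<and> length cs = girth E"
    unfolding girth_def by (rule LeastI_ex) (use assms in \<open>auto simp: has_dcycle_def\<close>)
  then show ?thesis using that by blast
qed

lemma two_le_girth:
  assumes "has_dcycle E" shows "2 \<le> girth E"
proof -
  obtain cs where "is_dcycle E cs" "length cs = girth E" using girth_attained assms .
  then show ?thesis by (simp add: is_dcycle_def)
qed

lemma girth_le_card:
  assumes "digraph V E" "has_dcycle E"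
  shows "girth E \<le> card V"
proof -
  obtain cs where cs: "is_dcycle E cs" "length cs = girth E" using girth_attained assms(2) .
  then have "set cs \<subseteq> V" using assms(1) set_dcycle_subset by (auto simp: digraph_def)
  then have "card (set cs) \<le> card V" using assms(1) by (intro card_mono) (auto simp: digraph_def)
  then show ?thesis using cs distinct_card by (fastforce simp: is_dcycle_def)
qed

definition induced_dcycle_vertex_sets :: "('a \<times> 'a) set \<Rightarrow> 'a set set" where
  "induced_dcycle_vertex_sets E = {set cs | cs. is_induced_dcycle E cs}"

lemma induced_dcycle_vertex_sets_subset_Pow:
  "E \<subseteq> V \<times> V \<Longrightarrow> induced_dcycle_vertex_sets E \<subseteq> Pow V"
  by (auto simp: induced_dcycle_vertex_sets_def is_induced_dcycle_def dest: set_dcycle_subset)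

lemma girth_le_card_induced_dcycle_vertex_set:
  assumes "X \<in> induced_dcycle_vertex_sets E"
  shows "girth E \<le> card X"
proof -
  obtain cs where X: "X = set cs" and cs: "is_dcycle E cs"
    using assms by (auto simp: induced_dcycle_vertex_sets_def is_induced_dcycle_def)
  have "card X = length cs" using cs distinct_card unfolding X is_dcycle_def by blast
  with girth_le[OF cs] show ?thesis by simp
qed

lemma card_induced_dcycle_vertex_sets_le:
  assumes "digraph V E"
  shows "card (induced_dcycle_vertex_sets E) \<le> num_induced_dcycles E"
proof -
  let ?P = "{(set cs, cycle_edges cs) | cs. is_induced_dcycle E cs}"
  have "(set cs, cycle_edges cs) \<in> Pow V \<times> Pow E" if "is_induced_dcycle E cs" for cs
  proof -
    have "is_dcycle E cs" using that by (simp add: is_induced_dcycle_def)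
    then show ?thesis
      using assms set_dcycle_subset[of E cs V] by (auto simp: digraph_def is_dcycle_iff_cycle_edges)
  qed
  then have "?P \<subseteq> Pow V \<times> Pow E" by blast
  moreover have "finite (Pow V \<times> Pow E)"
    using assms by (auto simp: digraph_def intro: finite_subset[of E "V \<times> V"])
  ultimately have "finite ?P" by (rule finite_subset)
  moreover have "induced_dcycle_vertex_sets E = fst ` ?P"
    unfolding induced_dcycle_vertex_sets_def by force
  ultimately show ?thesis unfolding num_induced_dcycles_def by (simp add: card_image_le)
qed

lemma num_induced_dcycles_pos:
  assumes "digraph V E" "has_dcycle E"
  shows "0 < num_induced_dcycles E"
proof -
  obtain cs where cs: "is_dcycle E cs" using assms(2) by (auto simp: has_dcycle_def)
  have "\<forall>v. (v, v) \<notin> E" using assms(1) by (simp add: digraph_def)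
  then obtain ci where "is_induced_dcycle E ci"
    using dcycle_contains_induced_dcycle[OF cs] by blast
  then have "induced_dcycle_vertex_sets E \<noteq> {}" by (auto simp: induced_dcycle_vertex_sets_def)
  moreover have "finite (induced_dcycle_vertex_sets E)"
    using assms(1) induced_dcycle_vertex_sets_subset_Pow[of E V]
    by (auto simp: digraph_def intro: finite_subset)
  ultimately show ?thesis
    using card_induced_dcycle_vertex_sets_le[OF assms(1)] card_gt_0_iff by fastforce
qed

lemma alpha_acyclic_ge_deletion_bound:
  fixes p :: real
  assumes D: "digraph V E" and p: "0 \<le> p" "p \<le> 1"
  shows "real (card V) * p - real (num_induced_dcycles E) * p ^ girth E \<le> real (alpha_acyclic V E)"
proof -
  let ?F = "induced_dcycle_vertex_sets E"
  have V: "finite V" and F: "?F \<subseteq> Pow V" and loopfree: "\<forall>v. (v, v) \<notin> E"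
    using D induced_dcycle_vertex_sets_subset_Pow by (auto simp: digraph_def)
  then have "finite ?F" by (meson finite_Pow_iff finite_subset)
  have "{} \<notin> ?F"
  proof
    assume "{} \<in> ?F"
    then obtain cs where "set cs = {}" "is_dcycle E cs"
      by (auto simp: induced_dcycle_vertex_sets_def is_induced_dcycle_def)
    then show False by (simp add: is_dcycle_def)
  qed
  have hitting: "\<exists>X\<in>?F. X \<subseteq> set cs" if cs: "is_dcycle E cs" for cs
  proof -
    obtain ci where "is_induced_dcycle E ci" "set ci \<subseteq> set cs"
      using dcycle_contains_induced_dcycle[OF cs loopfree] .
    then show ?thesis unfolding induced_dcycle_vertex_sets_def by blast
  qed
  obtain S where "S \<subseteq> V"
    and S: "real (card V) * p - (\<Sum>X\<in>?F. p ^ card X)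
      \<le> real (card S) - real (card {X\<in>?F. X \<subseteq> S})"
    using exists_subset_card_minus_covered_ge[OF V F p] .
  have "(\<Sum>X\<in>?F. p ^ card X) \<le> (\<Sum>X\<in>?F. p ^ girth E)"
    using girth_le_card_induced_dcycle_vertex_set p by (intro sum_mono power_decreasing) auto
  also have "\<dots> = real (card ?F) * p ^ girth E" by simp
  also have "\<dots> \<le> real (num_induced_dcycles E) * p ^ girth E"
    using card_induced_dcycle_vertex_sets_le[OF D] p by (intro mult_right_mono) auto
  finally have "(\<Sum>X\<in>?F. p ^ card X) \<le> real (num_induced_dcycles E) * p ^ girth E" .
  moreover have "real (card S) - real (card {X\<in>?F. X \<subseteq> S}) \<le> real (alpha_acyclic V E)"
    by (rule alpha_acyclic_ge_card_minus_covered[OF V \<open>finite ?F\<close> \<open>{} \<notin> ?F\<close> \<open>S \<subseteq> V\<close>])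
      (rule hitting)
  ultimately show ?thesis using S by linarith
qed

lemma deletion_bound_at_optimum:
  fixes n t :: real and g :: nat
  assumes g: "2 \<le> g" and n: "0 < n" and t: "0 < t" and tg: "n \<le> t * g"
  obtains p where "0 < p" and "p \<le> 1"
    and "n * p - t * p ^ g = (real g - 1) / g * (n ^ g / (t * g)) powr (1 / (real g - 1))"
proof -
  define q where "q = n / (t * g)"
  \<comment> \<open>the maximiser of n p - t p^g, where n = t g p^(g-1)\<close>
  define p where "p = q powr (1 / (real g - 1))"
  have q: "0 < q" "q \<le> 1" using g n t tg by (auto simp: q_def)
  have g1: "0 < real g - 1" "real (g - 1) = real g - 1" using g by auto
  have "0 < p" using q by (simp add: p_def)
  moreover have "p \<le> 1" using q g1 by (simp add: p_def powr_le1)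
  moreover have "n * p - t * p ^ g = (real g - 1) / g * (n ^ g / (t * g)) powr (1 / (real g - 1))"
  proof -
    have "p ^ (g - 1) = q"
      using q g1 by (simp add: p_def powr_realpow[symmetric] powr_powr)
    moreover have "g = Suc (g - 1)" using g by simp
    ultimately have "p ^ g = p * q" by (metis power_Suc)
    then have "n * p - t * p ^ g = (real g - 1) / g * (n * p)"
      using g t by (simp add: q_def field_simps)
    moreover have "n ^ g / (t * g) = n powr (real g - 1) * q"
    proof -
      have "n ^ g = n ^ (g - 1) * n" using \<open>g = Suc (g - 1)\<close> by (metis power_Suc2)
      moreover have "n ^ (g - 1) = n powr (real g - 1)"
        using powr_realpow[OF n, of "g - 1"] g1(2) by simp
      ultimately show ?thesis by (simp add: q_def)
    qed
    then have "n * p = (n ^ g / (t * g)) powr (1 / (real g - 1))"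
      using n q g1 by (simp add: p_def powr_mult powr_powr)
    ultimately show ?thesis by simp
  qed
  ultimately show ?thesis using that by blast
qed

theorem mainTheorem3:
  fixes V :: "'a set" and E :: "('a \<times> 'a) set"
  assumes "digraph V E"
    and "has_dcycle E"
    and "num_induced_dcycles E * girth E \<ge> card V"
  shows "real (alpha_acyclic V E) \<ge>
     (real (girth E) - 1) / real (girth E) *
     (real (card V) ^ girth E / (real (num_induced_dcycles E) * real (girth E)))
       powr (1 / (real (girth E) - 1))"
proof -
  have g: "2 \<le> girth E" using two_le_girth[OF assms(2)] .
  have n: "0 < real (card V)" using girth_le_card[OF assms(1,2)] g by simp
  have t: "0 < real (num_induced_dcycles E)" using num_induced_dcycles_pos[OF assms(1,2)] by simp
  have tg: "real (card V) \<le> real (num_induced_dcycles E) * real (girth E)"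
    using assms(3) by (simp only: of_nat_le_iff of_nat_mult[symmetric])
  obtain p where "0 < p" "p \<le> 1"
    "real (card V) * p - real (num_induced_dcycles E) * p ^ girth E =
     (real (girth E) - 1) / real (girth E) *
     (real (card V) ^ girth E / (real (num_induced_dcycles E) * real (girth E)))
       powr (1 / (real (girth E) - 1))"
    using deletion_bound_at_optimum[OF g n t tg] .
  then show ?thesis using alpha_acyclic_ge_deletion_bound[OF assms(1), of p] by linarith
qed

end
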